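(* Let $f:\mathbb{R}^{n\times n}\to\mathbb{R}$ be differentiable and suppose there are constants $\underline{\nu}_f\le\overline{\nu}_f$ such that \[ \frac{\underline{\nu}_f}{2}\|Y-X\|_{\mathsf F}^2\le f(Y)-f(X)-\langle\nabla f(X),Y-X\rangle\le\frac{\overline{\nu}_f}{2}\|Y-X\|_{\mathsf F}^2\quad\text{for all }X,Y\in\mathcal{D}_n . \] Let $0<p<1$, $\epsilon\ge 0$, $\overline{\nu}_h=p(1-p)(1+\epsilon)^{p-2}$, and \[ \sigma>\sigma^*_{p,\epsilon}:=\max\Big\{\frac{\overline{\nu}_f}{\overline{\nu}_h},0\Big\}. \] If $X_{\sigma,p,\epsilon}$ is a global minimizer of \[ \min_{X\in\mathcal{D}_n}\ F_{\sigma,p,\epsilon}(X):=f(X)+\sigma\sum_{i,j=1}^n (X_{ij}+\epsilon)^p , \] then $X_{\sigma,p,\epsilon}$ is also a global minimizer of $\min_{X\in\Pi_n} f(X)$.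
   Context: $\Pi_n$ is the set of $n\times n$ permutation matrices and $\mathcal{D}_n=\{X\in\mathbb{R}^{n\times n}: X\mathbf{e}=X^{\mathsf T}\mathbf{e}=\mathbf{e},\ X\ge0\}$ the set of doubly stochastic matrices ($\mathbf{e}$ the all-ones vector). $\langle M,N\rangle=\mathrm{tr}(M^{\mathsf T}N)$ and $\|\cdot\|_{\mathsf F}$ is the Frobenius norm. *)

theory Defs
  imports "HOL-Analysis.Analysis"
begin

text \<open>n x n real matrices are rendered as real^'n^'n; the inner product on this type is
  the sum of entrywise products, i.e. tr(M^T N), and its norm is the Frobenius norm.\<close>

definition doubly_stochastic :: "(real^'n^'n) set" where
  "doubly_stochastic = {X. (\<forall>i j. X$i$j \<ge> 0) \<and> (\<forall>i. (\<Sum>j\<in>UNIV. X$i$j) = 1)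
                          \<and> (\<forall>j. (\<Sum>i\<in>UNIV. X$i$j) = 1)}"

definition permutation_matrices :: "(real^'n^'n) set" where
  "permutation_matrices = {X. \<exists>\<pi>. \<pi> permutes (UNIV :: 'n set) \<and>
                              X = (\<chi> i j. if \<pi> i = j then 1 else 0)}"

end

theory Submission
  imports Defs
begin

text \<open>
  On \<open>[0, 1]\<close> the penalty \<open>t \<mapsto> (t + \<epsilon>) powr p\<close> is strongly concave with modulus
  \<open>p (1 - p) (1 + \<epsilon>) powr (p - 2)\<close>, while \<open>f\<close> has curvature at most \<open>\<nu>_f_up\<close>. Hence for
  \<open>\<sigma>\<close> above the threshold the objective is strictly concave along every line segment inside the
  doubly stochastic matrices. A doubly stochastic matrix that is not a permutation matrix has
  fractional entries, and every row or column containing one contains at least two. So there are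
  more fractional positions than independent row and column equations, and a nonzero matrix
  \<open>D\<close> supported on them with zero row and column sums exists; then \<open>X \<plusminus> \<delta> D\<close> stay doubly
  stochastic for small \<open>\<delta>\<close>. Strict concavity along this segment contradicts minimality, so
  the minimizer is a permutation matrix; since the penalty is constant on permutation matrices,
  it also minimizes \<open>f\<close> there.
\<close>

lemma powr_shifted_midpoint_strongly_concave:
  fixes p \<epsilon> a t :: real
  assumes p: "0 < p" "p < 1" and eps: "\<epsilon> \<ge> 0"
    and mem: "a - t \<in> {0<..<1}" "a + t \<in> {0<..<1}"
  shows "(a + t + \<epsilon>) powr p + (a - t + \<epsilon>) powr p - 2 * (a + \<epsilon>) powr p
         \<le> - (p * (1 - p) * (1 + \<epsilon>) powr (p - 2)) * t\<^sup>2"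
proof -
  define c where "c = p * (1 - p) * (1 + \<epsilon>) powr (p - 2)"
  define \<phi> where "\<phi> = (\<lambda>y::real. - ((y + \<epsilon>) powr p) - c / 2 * y\<^sup>2)"
  have "convex_on {0<..<1} \<phi>"
  proof (rule f''_ge0_imp_convex)
    fix y :: real assume y: "y \<in> {0<..<1}"
    hence pos: "0 < y + \<epsilon>" using eps by auto
    show "(\<phi> has_real_derivative - (p * (y + \<epsilon>) powr (p - 1)) - c * y) (at y)"
      unfolding \<phi>_def using pos
      by (auto intro!: derivative_eq_intros simp: power2_eq_square)
    show "((\<lambda>y. - (p * (y + \<epsilon>) powr (p - 1)) - c * y) has_real_derivative
            p * (1 - p) * (y + \<epsilon>) powr (p - 2) - c) (at y)"
      using pos by (auto intro!: derivative_eq_intros simp: algebra_simps)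
    have "(1 + \<epsilon>) powr (p - 2) \<le> (y + \<epsilon>) powr (p - 2)"
      by (rule powr_mono2') (use p pos y in auto)
    then show "p * (1 - p) * (y + \<epsilon>) powr (p - 2) - c \<ge> 0"
      unfolding c_def using p by (simp add: mult_left_mono)
  qed simp
  then have "\<phi> ((1 - 1/2) *\<^sub>R (a + t) + (1/2) *\<^sub>R (a - t))
      \<le> (1 - 1/2) * \<phi> (a + t) + (1/2) * \<phi> (a - t)"
    by (rule convex_onD) (use mem in auto)
  moreover have "(1 - 1/2) *\<^sub>R (a + t) + (1/2) *\<^sub>R (a - t) = a"
    by (simp add: field_simps)
  ultimately have "\<phi> a \<le> (1/2) * \<phi> (a + t) + (1/2) * \<phi> (a - t)"
    by simp
  then show ?thesis
    unfolding \<phi>_def c_def[symmetric] by (simp add: algebra_simps power2_eq_square)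
qed

lemma sum_fst_fiber:
  fixes E :: "('a::finite \<times> 'b::finite) set" and g :: "'a \<times> 'b \<Rightarrow> real"
  shows "(\<Sum>v\<in>E. of_bool (fst v = i) * g v) = (\<Sum>j | (i, j) \<in> E. g (i, j))"
proof -
  have "E \<inter> {v. fst v = i} = Pair i ` {j. (i, j) \<in> E}" by auto
  then have "(\<Sum>v\<in>E. of_bool (fst v = i) * g v) = sum g (Pair i ` {j. (i, j) \<in> E})"
    by simp
  also have "\<dots> = (\<Sum>j | (i, j) \<in> E. g (i, j))"
    by (subst sum.reindex) (auto simp: inj_on_def)
  finally show ?thesis .
qed

lemma sum_snd_fiber:
  fixes E :: "('a::finite \<times> 'b::finite) set" and g :: "'a \<times> 'b \<Rightarrow> real"
  shows "(\<Sum>v\<in>E. of_bool (snd v = j) * g v) = (\<Sum>i | (i, j) \<in> E. g (i, j))"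
proof -
  have "E \<inter> {v. snd v = j} = (\<lambda>i. (i, j)) ` {i. (i, j) \<in> E}" by auto
  then have "(\<Sum>v\<in>E. of_bool (snd v = j) * g v) = sum g ((\<lambda>i. (i, j)) ` {i. (i, j) \<in> E})"
    by simp
  also have "\<dots> = (\<Sum>i | (i, j) \<in> E. g (i, j))"
    by (subst sum.reindex) (auto simp: inj_on_def)
  finally show ?thesis .
qed

lemma card_fst_image_le_half:
  fixes E :: "('a::finite \<times> 'b::finite) set"
  assumes "\<And>i j. (i, j) \<in> E \<Longrightarrow> \<exists>k. k \<noteq> j \<and> (i, k) \<in> E"
  shows "2 * card (fst ` E) \<le> card E"
proof -
  have fiber: "2 \<le> card {j. (i, j) \<in> E}" if "i \<in> fst ` E" for i
  proof -
    from that obtain j where j: "(i, j) \<in> E" by force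
    with assms obtain k where "k \<noteq> j" "(i, k) \<in> E" by blast
    with j have "{j, k} \<subseteq> {j. (i, j) \<in> E}" by auto
    from card_mono[OF _ this] \<open>k \<noteq> j\<close> show ?thesis by simp
  qed
  have "E = Sigma (fst ` E) (\<lambda>i. {j. (i, j) \<in> E})" by force
  then have "card E = (\<Sum>i\<in>fst ` E. card {j. (i, j) \<in> E})"
    by (metis card_SigmaI finite)
  also have "\<dots> \<ge> (\<Sum>i\<in>fst ` E. 2)" by (rule sum_mono) (rule fiber)
  finally show ?thesis by simp
qed

lemma homogeneous_system_nontrivial_solution:
  fixes a :: "'q \<Rightarrow> 'v \<Rightarrow> real"
  assumes "finite Q" "finite V" "card Q < card V"
  shows "\<exists>x. (\<exists>v\<in>V. x v \<noteq> 0) \<and> (\<forall>q\<in>Q. (\<Sum>v\<in>V. a q v * x v) = 0)"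
  using assms
proof (induction Q arbitrary: V a rule: finite_induct)
  case empty
  then obtain v where "v \<in> V" by fastforce
  then show ?case by (intro exI[of _ "\<lambda>w. of_bool (w = v)"]) auto
next
  case (insert q Q)
  show ?case
  proof (cases "\<forall>v\<in>V. a q v = 0")
    case True
    with insert show ?thesis by fastforce
  next
    case False
    then obtain v0 where v0: "v0 \<in> V" "a q v0 \<noteq> 0" by auto
    \<comment> \<open>Gaussian elimination: solve equation \<open>q\<close> for the unknown \<open>v0\<close> and substitute.\<close>
    define V' where "V' = V - {v0}"
    define a' where "a' = (\<lambda>q' v. a q' v - a q' v0 * a q v / a q v0)"
    have "finite V'" "card Q < card V'"
      using insert.prems insert.hyps v0 by (simp_all add: V'_def)
    with insert.IH obtain y where
      y: "\<exists>v\<in>V'. y v \<noteq> 0" "\<forall>q'\<in>Q. (\<Sum>v\<in>V'. a' q' v * y v) = 0" by blast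
    define S where "S = (\<Sum>w\<in>V'. a q w * y w)"
    define x where "x = (\<lambda>v. if v = v0 then - S / a q v0 else y v)"
    have split: "(\<Sum>v\<in>V. b v * x v) = b v0 * (- S / a q v0) + (\<Sum>v\<in>V'. b v * y v)" for b
    proof -
      have "(\<Sum>v\<in>V. b v * x v) = b v0 * x v0 + (\<Sum>v\<in>V'. b v * x v)"
        unfolding V'_def using insert.prems v0 by (simp add: sum.remove)
      also have "(\<Sum>v\<in>V'. b v * x v) = (\<Sum>v\<in>V'. b v * y v)"
        by (rule sum.cong) (auto simp: x_def V'_def)
      finally show ?thesis by (simp add: x_def)
    qed
    show ?thesis
    proof (intro exI[of _ x] conjI ballI)
      show "\<exists>v\<in>V. x v \<noteq> 0" using y by (auto simp: x_def V'_def)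
    next
      fix q' assume "q' \<in> insert q Q"
      then consider "q' = q" | "q' \<in> Q" by auto
      then show "(\<Sum>v\<in>V. a q' v * x v) = 0"
      proof cases
        case 1 then show ?thesis using v0 by (simp add: split S_def)
      next
        case 2
        have "(\<Sum>v\<in>V'. a' q' v * y v) = (\<Sum>v\<in>V'. a q' v * y v) - a q' v0 / a q v0 * S"
          by (simp add: a'_def S_def algebra_simps sum_subtractf sum_distrib_left)
        with y 2 have "(\<Sum>v\<in>V'. a q' v * y v) = a q' v0 / a q v0 * S" by auto
        then show ?thesis by (simp add: split)
      qed
    qed
  qed
qed

lemma col_sum_zero_from_other_sums:
  fixes x :: "'a::finite \<times> 'b::finite \<Rightarrow> real"
  assumes rows: "\<And>i. (\<Sum>j\<in>UNIV. x (i, j)) = 0"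
    and cols: "\<And>j. j \<noteq> j0 \<Longrightarrow> (\<Sum>i\<in>UNIV. x (i, j)) = 0"
  shows "(\<Sum>i\<in>UNIV. x (i, j)) = 0"
proof (cases "j = j0")
  case True
  have "0 = (\<Sum>i\<in>UNIV. \<Sum>j\<in>UNIV. x (i, j))" by (simp add: rows)
  also have "\<dots> = (\<Sum>j\<in>UNIV. \<Sum>i\<in>UNIV. x (i, j))"
    by (rule sum.swap)
  also have "\<dots> = (\<Sum>i\<in>UNIV. x (i, j0)) + (\<Sum>j\<in>UNIV - {j0}. \<Sum>i\<in>UNIV. x (i, j))"
    by (rule sum.remove) simp_all
  also have "\<dots> = (\<Sum>i\<in>UNIV. x (i, j0))"
    using cols by simp
  finally show ?thesis using True by simp
qed (use cols in blast)

lemma balanced_weighting_exists: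
  fixes E :: "('n::finite \<times> 'n) set"
  assumes "E \<noteq> {}"
    and row: "\<And>i j. (i, j) \<in> E \<Longrightarrow> \<exists>k. k \<noteq> j \<and> (i, k) \<in> E"
    and col: "\<And>i j. (i, j) \<in> E \<Longrightarrow> \<exists>k. k \<noteq> i \<and> (k, j) \<in> E"
  obtains x :: "'n \<times> 'n \<Rightarrow> real"
  where "\<exists>v\<in>E. x v \<noteq> 0" "\<And>v. v \<notin> E \<Longrightarrow> x v = 0"
    "\<And>i. (\<Sum>j\<in>UNIV. x (i, j)) = 0" "\<And>j. (\<Sum>i\<in>UNIV. x (i, j)) = 0"
proof -
  define R where "R = fst ` E"
  define C where "C = snd ` E"
  have cR: "2 * card R \<le> card E"
    unfolding R_def using row by (rule card_fst_image_le_half)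
  have "2 * card (fst ` prod.swap ` E) \<le> card (prod.swap ` E)"
    by (rule card_fst_image_le_half) (use col in force)
  then have cC: "2 * card C \<le> card E"
    unfolding C_def by (simp add: image_image card_image)
  obtain c0 where c0: "c0 \<in> C" using \<open>E \<noteq> {}\<close> unfolding C_def by auto
  \<comment> \<open>Row and column sums of a matrix sum to the same total, so one column equation is redundant:
    dropping it leaves fewer equations than unknowns.\<close>
  define Q where "Q = Inl ` R \<union> Inr ` (C - {c0})"
  have "card Q \<le> card R + card (C - {c0})"
    unfolding Q_def by (rule order.trans[OF card_Un_le add_mono]) (auto intro: card_image_le)
  with cR cC c0 have "card Q < card E"
    using card_gt_0_iff[of C] by force
  define a :: "'n + 'n \<Rightarrow> 'n \<times> 'n \<Rightarrow> real"
    where "a q v = (case q of Inl i \<Rightarrow> of_bool (fst v = i) | Inr j \<Rightarrow> of_bool (snd v = j))" for q v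
  from \<open>card Q < card E\<close> obtain y where y: "\<exists>v\<in>E. y v \<noteq> 0" "\<forall>q\<in>Q. (\<Sum>v\<in>E. a q v * y v) = 0"
    using homogeneous_system_nontrivial_solution[of Q E a] by auto
  define x where "x v = (if v \<in> E then y v else 0)" for v
  have row_sum: "(\<Sum>j\<in>UNIV. x (i, j)) = (\<Sum>v\<in>E. of_bool (fst v = i) * y v)" for i
    by (simp add: x_def sum_fst_fiber sum.If_cases)
  have col_sum: "(\<Sum>i\<in>UNIV. x (i, j)) = (\<Sum>v\<in>E. of_bool (snd v = j) * y v)" for j
    by (simp add: x_def sum_snd_fiber sum.If_cases)
  have constraint: "(\<Sum>v\<in>E. a q v * y v) = 0" if "q \<noteq> Inr c0" for q
  proof (cases "q \<in> Q")
    case False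
    with that have "\<forall>v\<in>E. a q v = 0"
      by (cases q) (force simp: Q_def R_def C_def a_def)+
    then show ?thesis by simp
  qed (use y(2) in blast)
  have rows: "(\<Sum>j\<in>UNIV. x (i, j)) = 0" for i
    using constraint[of "Inl i"] by (simp add: row_sum a_def)
  have cols: "(\<Sum>i\<in>UNIV. x (i, j)) = 0" if "j \<noteq> c0" for j
    using constraint[of "Inr j"] that by (simp add: col_sum a_def)
  have "(\<Sum>i\<in>UNIV. x (i, j)) = 0" for j
    by (rule col_sum_zero_from_other_sums[OF rows cols])
  moreover have "\<exists>v\<in>E. x v \<noteq> 0" using y(1) by (auto simp: x_def)
  ultimately show ?thesis
    by (intro that[of x] rows) (simp_all add: x_def)
qed

lemma doubly_stochastic_entry_bounds:
  assumes "X \<in> doubly_stochastic"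
  shows "0 \<le> X$i$j" "X$i$j \<le> 1"
proof -
  show "0 \<le> X$i$j" using assms by (simp add: doubly_stochastic_def)
  have "X$i$j \<le> (\<Sum>k\<in>UNIV. X$i$k)"
    by (rule member_le_sum) (use assms in \<open>simp_all add: doubly_stochastic_def\<close>)
  then show "X$i$j \<le> 1" using assms by (simp add: doubly_stochastic_def)
qed

lemma probability_vector_other_fractional_entry:
  fixes g :: "'a::finite \<Rightarrow> real"
  assumes nonneg: "\<And>k. 0 \<le> g k" and sum: "sum g UNIV = 1" and j: "0 < g j" "g j < 1"
  shows "\<exists>k. k \<noteq> j \<and> 0 < g k \<and> g k < 1"
proof -
  have rest: "(\<Sum>k\<in>UNIV - {j}. g k) = 1 - g j"
    using sum sum.remove[of UNIV j g] by simp
  then obtain k where k: "k \<noteq> j" "0 < g k"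
    using j nonneg sum_nonpos[of "UNIV - {j}" g] by (force simp: not_less)
  have "g k \<le> (\<Sum>k\<in>UNIV - {j}. g k)"
    by (rule member_le_sum) (use k nonneg in auto)
  with k rest j show ?thesis by auto
qed

lemma zero_one_probability_vector_unique:
  fixes g :: "'a::finite \<Rightarrow> real"
  assumes "\<And>k. g k = 0 \<or> g k = 1" and "sum g UNIV = 1"
  shows "\<exists>!k. g k = 1"
proof -
  have "g = (\<lambda>k. of_bool (g k = 1))" using assms(1) by (force simp: fun_eq_iff)
  then have "card {k. g k = 1} = 1"
    using assms(2) by (metis (mono_tags) Int_UNIV_left of_nat_eq_1_iff sum_of_bool_eq finite)
  then obtain k0 where "{k. g k = 1} = {k0}" by (auto simp: card_1_singleton_iff)
  then have "g k = 1 \<longleftrightarrow> k = k0" for k by blast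
  then show ?thesis by auto
qed

lemma doubly_stochastic_zero_one_imp_permutation:
  fixes X :: "real^'n^'n"
  assumes X: "X \<in> doubly_stochastic" and zero_one: "\<And>i j. X$i$j = 0 \<or> X$i$j = 1"
  shows "X \<in> permutation_matrices"
proof -
  have row: "\<exists>!j. X$i$j = 1" for i
    by (rule zero_one_probability_vector_unique) (use X zero_one in \<open>auto simp: doubly_stochastic_def\<close>)
  have col: "\<exists>!i. X$i$j = 1" for j
    by (rule zero_one_probability_vector_unique) (use X zero_one in \<open>auto simp: doubly_stochastic_def\<close>)
  define \<pi> where "\<pi> i = (THE j. X$i$j = 1)" for i
  have \<pi>: "X$i$j = 1 \<longleftrightarrow> \<pi> i = j" for i j
    using theI'[OF row[of i]] row[of i] unfolding \<pi>_def by blast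
  have "inj \<pi>"
    by (rule injI) (use col \<pi> in metis)
  then have "bij \<pi>" by (simp add: bij_def finite_UNIV_inj_surj)
  then have "\<pi> permutes UNIV" by (intro bij_imp_permutes) auto
  moreover have "X = (\<chi> i j. if \<pi> i = j then 1 else 0)"
    using zero_one \<pi> by (auto simp: vec_eq_iff)
  ultimately show ?thesis unfolding permutation_matrices_def by blast
qed

lemma exists_pos_scale_below:
  fixes x c :: "'a \<Rightarrow> real"
  assumes "finite E" and c: "\<And>v. v \<in> E \<Longrightarrow> 0 < c v"
  obtains \<delta> :: real where "0 < \<delta>" "\<And>v. v \<in> E \<Longrightarrow> \<delta> * \<bar>x v\<bar> < c v"
proof (cases "E = {}")
  case True
  then show ?thesis using that[of 1] by simp
next
  case False
  define m where "m = Min (c ` E)"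
  define M where "M = 1 + (\<Sum>v\<in>E. \<bar>x v\<bar>)"
  have m_pos: "0 < m"
    unfolding m_def using assms False by (subst Min_gr_iff) auto
  have M_pos: "0 < M"
    unfolding M_def by (simp add: add_pos_nonneg sum_nonneg)
  have "m / M * \<bar>x v\<bar> < c v" if "v \<in> E" for v
  proof -
    have "\<bar>x v\<bar> \<le> (\<Sum>v\<in>E. \<bar>x v\<bar>)" by (rule member_le_sum) (use that assms in auto)
    then have "\<bar>x v\<bar> < M" unfolding M_def by simp
    then have "m / M * \<bar>x v\<bar> < m / M * M"
      using m_pos M_pos by (intro mult_strict_left_mono) auto
    also have "\<dots> = m" using M_pos by simp
    also have "m \<le> c v"
      unfolding m_def using assms that by simp
    finally show ?thesis .
  qed
  with m_pos M_pos show ?thesis by (intro that[of "m / M"]) auto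
qed

lemma doubly_stochastic_fractional_entry:
  fixes X :: "real^'n^'n"
  assumes X: "X \<in> doubly_stochastic" and not_perm: "X \<notin> permutation_matrices"
  shows "\<exists>i j. 0 < X$i$j \<and> X$i$j < 1"
proof (rule ccontr)
  assume none: "\<not> ?thesis"
  have "X$i$j = 0 \<or> X$i$j = 1" for i j
  proof -
    have "\<not> (0 < X$i$j \<and> X$i$j < 1)" using none by blast
    with doubly_stochastic_entry_bounds[OF X, of i j] show ?thesis by linarith
  qed
  with X not_perm show False using doubly_stochastic_zero_one_imp_permutation by blast
qed

lemma doubly_stochastic_balanced_perturbation:
  fixes X :: "real^'n^'n"
  assumes X: "X \<in> doubly_stochastic" and not_perm: "X \<notin> permutation_matrices"
  obtains d :: "real^'n^'n"
  where "d \<noteq> 0" "\<And>i. (\<Sum>j\<in>UNIV. d$i$j) = 0" "\<And>j. (\<Sum>i\<in>UNIV. d$i$j) = 0"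
    "\<And>i j. d$i$j \<noteq> 0 \<Longrightarrow> \<bar>d$i$j\<bar> < X$i$j \<and> \<bar>d$i$j\<bar> < 1 - X$i$j"
proof -
  define E where "E = {(i, j). 0 < X$i$j \<and> X$i$j < 1}"
  have fractional: "E \<noteq> {}"
    using doubly_stochastic_fractional_entry[OF X not_perm] by (auto simp: E_def)
  have row_partner: "\<exists>k. k \<noteq> j \<and> (i, k) \<in> E" if "(i, j) \<in> E" for i j
    using probability_vector_other_fractional_entry[of "\<lambda>k. X$i$k" j] X that
    by (auto simp: E_def doubly_stochastic_def)
  have col_partner: "\<exists>k. k \<noteq> i \<and> (k, j) \<in> E" if "(i, j) \<in> E" for i j
    using probability_vector_other_fractional_entry[of "\<lambda>k. X$k$j" i] X that
    by (auto simp: E_def doubly_stochastic_def)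
  obtain x :: "'n \<times> 'n \<Rightarrow> real" where x: "\<exists>v\<in>E. x v \<noteq> 0" "\<And>v. v \<notin> E \<Longrightarrow> x v = 0"
    "\<And>i. (\<Sum>j\<in>UNIV. x (i, j)) = 0" "\<And>j. (\<Sum>i\<in>UNIV. x (i, j)) = 0"
    using balanced_weighting_exists[OF fractional row_partner col_partner] by metis
  obtain \<delta> where \<delta>: "0 < \<delta>"
    "\<And>v. v \<in> E \<Longrightarrow> \<delta> * \<bar>x v\<bar> < min (X$fst v$snd v) (1 - X$fst v$snd v)"
    by (rule exists_pos_scale_below[where E = E and x = x
          and c = "\<lambda>v. min (X$fst v$snd v) (1 - X$fst v$snd v)"]) (auto simp: E_def)
  define d :: "real^'n^'n" where "d = (\<chi> i j. \<delta> * x (i, j))"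
  show ?thesis
  proof
    obtain i j where "x (i, j) \<noteq> 0" using x(1) by auto
    with \<delta>(1) show "d \<noteq> 0" by (auto simp: d_def vec_eq_iff)
    show "(\<Sum>j\<in>UNIV. d$i$j) = 0" for i
      by (simp add: d_def x(3) flip: sum_distrib_left)
    show "(\<Sum>i\<in>UNIV. d$i$j) = 0" for j
      by (simp add: d_def x(4) flip: sum_distrib_left)
  next
    fix i j assume "d$i$j \<noteq> 0"
    then have "(i, j) \<in> E" using x(2) by (auto simp: d_def)
    from \<delta>(2)[OF this] \<delta>(1) show "\<bar>d$i$j\<bar> < X$i$j \<and> \<bar>d$i$j\<bar> < 1 - X$i$j"
      by (simp add: d_def abs_mult)
  qed
qed

lemma doubly_stochastic_add_balanced:
  fixes X d :: "real^'n^'n"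
  assumes X: "X \<in> doubly_stochastic"
    and rows: "\<And>i. (\<Sum>j\<in>UNIV. d$i$j) = 0" and cols: "\<And>j. (\<Sum>i\<in>UNIV. d$i$j) = 0"
    and small: "\<And>i j. \<bar>d$i$j\<bar> \<le> X$i$j"
  shows "X + d \<in> doubly_stochastic"
proof -
  have "0 \<le> X$i$j + d$i$j" for i j using small[of i j] by linarith
  with X rows cols show ?thesis by (simp add: doubly_stochastic_def sum.distrib)
qed

lemma doubly_stochastic_segment:
  fixes X :: "real^'n^'n"
  assumes X: "X \<in> doubly_stochastic" and not_perm: "X \<notin> permutation_matrices"
  obtains d :: "real^'n^'n"
  where "d \<noteq> 0" "X + d \<in> doubly_stochastic" "X - d \<in> doubly_stochastic"
    "\<And>i j. d$i$j \<noteq> 0 \<Longrightarrow> \<bar>d$i$j\<bar> < X$i$j \<and> \<bar>d$i$j\<bar> < 1 - X$i$j"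
proof -
  obtain d where d: "d \<noteq> 0" "\<And>i. (\<Sum>j\<in>UNIV. d$i$j) = 0" "\<And>j. (\<Sum>i\<in>UNIV. d$i$j) = 0"
    and small: "\<And>i j. d$i$j \<noteq> 0 \<Longrightarrow> \<bar>d$i$j\<bar> < X$i$j \<and> \<bar>d$i$j\<bar> < 1 - X$i$j"
    using doubly_stochastic_balanced_perturbation[OF X not_perm] by blast
  have small_le: "\<bar>d$i$j\<bar> \<le> X$i$j" for i j
    using small[of i j] doubly_stochastic_entry_bounds[OF X, of i j] by force
  have "X + d \<in> doubly_stochastic"
    by (rule doubly_stochastic_add_balanced[OF X d(2,3) small_le])
  moreover have "X + - d \<in> doubly_stochastic"
    by (rule doubly_stochastic_add_balanced[OF X]) (use d small_le in \<open>simp_all add: sum_negf\<close>)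
  ultimately show ?thesis using that d(1) small by simp
qed

definition penalty :: "real \<Rightarrow> real \<Rightarrow> real^'n^'n \<Rightarrow> real" where
  "penalty \<epsilon> p Y = (\<Sum>i\<in>UNIV. \<Sum>j\<in>UNIV. (Y$i$j + \<epsilon>) powr p)"

lemma permutation_matrices_subset_doubly_stochastic:
  "permutation_matrices \<subseteq> doubly_stochastic"
proof
  fix Y :: "real^'n^'n" assume "Y \<in> permutation_matrices"
  then obtain \<pi> where \<pi>: "\<pi> permutes UNIV" and Y: "Y = (\<chi> i j. if \<pi> i = j then 1 else 0)"
    unfolding permutation_matrices_def by blast
  have "{i. \<pi> i = j} = {inv \<pi> j}" for j
    using permutes_inverses[OF \<pi>] by auto
  then show "Y \<in> doubly_stochastic"
    unfolding Y doubly_stochastic_def by (simp add: sum.If_cases)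
qed

lemma penalty_permutation_matrix:
  fixes Y :: "real^'n^'n"
  assumes "Y \<in> permutation_matrices"
  shows "penalty \<epsilon> p Y = CARD('n) * ((1 + \<epsilon>) powr p + (CARD('n) - 1) * \<epsilon> powr p)"
proof -
  obtain \<pi> where Y: "Y = (\<chi> i j. if \<pi> i = j then 1 else 0)"
    using assms unfolding permutation_matrices_def by blast
  have "(\<Sum>j\<in>UNIV. (Y$i$j + \<epsilon>) powr p) = (1 + \<epsilon>) powr p + (CARD('n) - 1) * \<epsilon> powr p" for i
  proof -
    have "(\<Sum>j\<in>UNIV. (Y$i$j + \<epsilon>) powr p)
        = (1 + \<epsilon>) powr p + (\<Sum>j\<in>UNIV - {\<pi> i}. (Y$i$j + \<epsilon>) powr p)"
      by (subst sum.remove[of UNIV "\<pi> i"]) (simp_all add: Y)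
    also have "(\<Sum>j\<in>UNIV - {\<pi> i}. (Y$i$j + \<epsilon>) powr p) = (\<Sum>j\<in>UNIV - {\<pi> i}. \<epsilon> powr p)"
      by (rule sum.cong) (auto simp: Y)
    finally show ?thesis by simp
  qed
  then show ?thesis by (simp add: penalty_def)
qed

lemma power2_norm_matrix:
  fixes d :: "real^'n^'m"
  shows "(norm d)\<^sup>2 = (\<Sum>i\<in>UNIV. \<Sum>j\<in>UNIV. (d$i$j)\<^sup>2)"
proof -
  have "(norm d)\<^sup>2 = (\<Sum>i\<in>UNIV. d$i \<bullet> d$i)"
    by (simp add: power2_norm_eq_inner inner_vec_def)
  then show ?thesis by (simp add: inner_vec_def power2_eq_square)
qed

lemma second_difference_le_of_upper_curvature:
  fixes f :: "'a::real_normed_vector \<Rightarrow> real"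
  assumes "f differentiable (at x)"
    and "f (x + h) - f x - frechet_derivative f (at x) h \<le> \<nu> / 2 * (norm h)\<^sup>2"
    and "f (x - h) - f x - frechet_derivative f (at x) (- h) \<le> \<nu> / 2 * (norm h)\<^sup>2"
  shows "f (x + h) + f (x - h) - 2 * f x \<le> \<nu> * (norm h)\<^sup>2"
proof -
  have "linear (frechet_derivative f (at x))"
    using assms(1) frechet_derivative_works has_derivative_linear by blast
  then have "frechet_derivative f (at x) (- h) = - frechet_derivative f (at x) h"
    by (rule linear_neg)
  with assms(2,3) show ?thesis by simp
qed

lemma penalty_second_difference:
  fixes X d :: "real^'n^'n"
  assumes p: "0 < p" "p < 1" and eps: "\<epsilon> \<ge> 0"
    and small: "\<And>i j. d$i$j \<noteq> 0 \<Longrightarrow> \<bar>d$i$j\<bar> < X$i$j \<and> \<bar>d$i$j\<bar> < 1 - X$i$j"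
  shows "penalty \<epsilon> p (X + d) + penalty \<epsilon> p (X - d) - 2 * penalty \<epsilon> p X
     \<le> - (p * (1 - p) * (1 + \<epsilon>) powr (p - 2)) * (norm d)\<^sup>2"
proof -
  have entry: "(X$i$j + d$i$j + \<epsilon>) powr p + (X$i$j - d$i$j + \<epsilon>) powr p - 2 * (X$i$j + \<epsilon>) powr p
      \<le> - (p * (1 - p) * (1 + \<epsilon>) powr (p - 2)) * (d$i$j)\<^sup>2" for i j
  proof (cases "d$i$j = 0")
    case False
    with small[of i j] show ?thesis
      by (intro powr_shifted_midpoint_strongly_concave p eps) auto
  qed simp
  have "penalty \<epsilon> p (X + d) + penalty \<epsilon> p (X - d) - 2 * penalty \<epsilon> p X
      = (\<Sum>i\<in>UNIV. \<Sum>j\<in>UNIV. (X$i$j + d$i$j + \<epsilon>) powr p + (X$i$j - d$i$j + \<epsilon>) powr p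
           - 2 * (X$i$j + \<epsilon>) powr p)"
    by (simp add: penalty_def sum.distrib sum_subtractf sum_distrib_left)
  also have "\<dots> \<le> (\<Sum>i\<in>UNIV. \<Sum>j\<in>UNIV. - (p * (1 - p) * (1 + \<epsilon>) powr (p - 2)) * (d$i$j)\<^sup>2)"
    by (intro sum_mono entry)
  also have "\<dots> = - (p * (1 - p) * (1 + \<epsilon>) powr (p - 2)) * (norm d)\<^sup>2"
    by (simp add: power2_norm_matrix sum_distrib_left)
  finally show ?thesis .
qed

lemma penalized_objective_strictly_midpoint_concave:
  fixes f :: "real^'n^'n \<Rightarrow> real" and X d :: "real^'n^'n"
  assumes diff: "f differentiable (at X)"
    and upper: "\<And>Y. Y \<in> {X + d, X - d} \<Longrightarrow>
      f Y - f X - frechet_derivative f (at X) (Y - X) \<le> \<nu> / 2 * (norm (Y - X))\<^sup>2"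
    and p: "0 < p" "p < 1" and eps: "\<epsilon> \<ge> 0"
    and \<sigma>: "0 \<le> \<sigma>" "\<nu> < \<sigma> * (p * (1 - p) * (1 + \<epsilon>) powr (p - 2))"
    and "d \<noteq> 0"
    and small: "\<And>i j. d$i$j \<noteq> 0 \<Longrightarrow> \<bar>d$i$j\<bar> < X$i$j \<and> \<bar>d$i$j\<bar> < 1 - X$i$j"
  shows "(f (X + d) + \<sigma> * penalty \<epsilon> p (X + d)) + (f (X - d) + \<sigma> * penalty \<epsilon> p (X - d))
    < 2 * (f X + \<sigma> * penalty \<epsilon> p X)"
proof -
  define c where "c = p * (1 - p) * (1 + \<epsilon>) powr (p - 2)"
  have "f (X + d) + f (X - d) - 2 * f X \<le> \<nu> * (norm d)\<^sup>2"
    using diff upper[of "X + d"] upper[of "X - d"]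
    by (intro second_difference_le_of_upper_curvature) simp_all
  moreover have "penalty \<epsilon> p (X + d) + penalty \<epsilon> p (X - d) - 2 * penalty \<epsilon> p X \<le> - c * (norm d)\<^sup>2"
    unfolding c_def using penalty_second_difference[OF p eps small] by simp
  then have "\<sigma> * (penalty \<epsilon> p (X + d) + penalty \<epsilon> p (X - d) - 2 * penalty \<epsilon> p X)
      \<le> \<sigma> * (- c * (norm d)\<^sup>2)"
    using \<sigma>(1) by (intro mult_left_mono) simp_all
  moreover have "0 < (\<sigma> * c - \<nu>) * (norm d)\<^sup>2"
    using \<sigma>(2) \<open>d \<noteq> 0\<close> unfolding c_def by simp
  ultimately show ?thesis by (simp add: algebra_simps)
qed

theorem theorem3p2:
  fixes f :: "real^'n^'n \<Rightarrow> real"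
    and nu_f_low nu_f_up p \<epsilon> \<sigma> :: real
    and Xs :: "real^'n^'n"
  assumes diff: "\<forall>X. f differentiable (at X)"
    and nu_le: "nu_f_low \<le> nu_f_up"
    and bounds: "\<forall>X\<in>doubly_stochastic. \<forall>Y\<in>doubly_stochastic.
         nu_f_low / 2 * (norm (Y - X))\<^sup>2 \<le> f Y - f X - frechet_derivative f (at X) (Y - X)
       \<and> f Y - f X - frechet_derivative f (at X) (Y - X) \<le> nu_f_up / 2 * (norm (Y - X))\<^sup>2"
    and p: "0 < p" "p < 1"
    and eps: "\<epsilon> \<ge> 0"
    and sigma: "\<sigma> > max (nu_f_up / (p * (1 - p) * (1 + \<epsilon>) powr (p - 2))) 0"
    and Xs_mem: "Xs \<in> doubly_stochastic"
    and Xs_min: "\<forall>Y\<in>doubly_stochastic.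
         f Xs + \<sigma> * (\<Sum>i\<in>UNIV. \<Sum>j\<in>UNIV. (Xs$i$j + \<epsilon>) powr p)
       \<le> f Y + \<sigma> * (\<Sum>i\<in>UNIV. \<Sum>j\<in>UNIV. (Y$i$j + \<epsilon>) powr p)"
  shows "Xs \<in> permutation_matrices \<and> (\<forall>Y\<in>permutation_matrices. f Xs \<le> f Y)"
proof
  have min: "f Xs + \<sigma> * penalty \<epsilon> p Xs \<le> f Y + \<sigma> * penalty \<epsilon> p Y" if "Y \<in> doubly_stochastic" for Y
    using Xs_min that unfolding penalty_def by blast
  have "0 < p * (1 - p) * (1 + \<epsilon>) powr (p - 2)"
    using p eps by (intro mult_pos_pos) auto
  with sigma have \<sigma>: "0 \<le> \<sigma>" "nu_f_up < \<sigma> * (p * (1 - p) * (1 + \<epsilon>) powr (p - 2))"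
    by (simp_all add: pos_divide_less_eq)
  show perm: "Xs \<in> permutation_matrices"
  proof (rule ccontr)
    assume "Xs \<notin> permutation_matrices"
    then obtain d where "d \<noteq> 0" and plus: "Xs + d \<in> doubly_stochastic"
      and minus: "Xs - d \<in> doubly_stochastic"
      and small: "\<And>i j. d$i$j \<noteq> 0 \<Longrightarrow> \<bar>d$i$j\<bar> < Xs$i$j \<and> \<bar>d$i$j\<bar> < 1 - Xs$i$j"
      using doubly_stochastic_segment[OF Xs_mem] by blast
    have "f (Xs + d) + \<sigma> * penalty \<epsilon> p (Xs + d) + (f (Xs - d) + \<sigma> * penalty \<epsilon> p (Xs - d))
      < 2 * (f Xs + \<sigma> * penalty \<epsilon> p Xs)"
      using diff bounds Xs_mem plus minus
      by (intro penalized_objective_strictly_midpoint_concave[OF _ _ p eps \<sigma> \<open>d \<noteq> 0\<close> small]) auto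
    with min[OF plus] min[OF minus] show False by simp
  qed
  show "\<forall>Y\<in>permutation_matrices. f Xs \<le> f Y"
  proof
    fix Y :: "real^'n^'n" assume "Y \<in> permutation_matrices"
    with perm min[of Y] permutation_matrices_subset_doubly_stochastic show "f Xs \<le> f Y"
      by (auto simp: penalty_permutation_matrix)
  qed
qed

end
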